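(* Let $P$ be (the normalised CFMDP of) a program over label set $\Sigma$, let $\Phi=(\varphi_e,\varphi_f)$ be a specification and let $\beta\in[0,1]$. Suppose there exist PCFAs $Q$ and $A$ over $\Sigma$ satisfying the following three conditions: (i) $\mathcal{L}(P)\subseteq\mathcal{L}(Q)\cup\mathcal{L}(A)$; (ii) for every $\tau\in\mathcal{L}(Q)$ and every state $s\models\varphi_e$, $[\![\tau]\!](s)\not\models\neg\varphi_f$, i.e. the Hoare triple $\{\varphi_e\}\,\tau\,\{\varphi_f\}$ holds; (iii) $\mathbb{P}^{\mathcal{L}}_\Phi(\mathcal{L}(A))\le\beta$. Then $\mathbb{P}_\Phi(P)\le\beta$.
   Context: Labels. $\Sigma$ is a finite label set. It contains probabilistic labels $\mathrm{Pb}_{(i,\mathtt{L})}$ and $\mathrm{Pb}_{(i,\mathtt{R})}$, one pair per identifier $i$ of a fair binary probabilistic choice. The other labels are non-random (set $\Sigma^-$: statements, assume-statements, non-deterministic labels $*_i$). PCFA. A PCFA is a tuple $(L,\Sigma,\delta,\ell_0,\ell_e)$ with $L$ finite, $\delta\subseteq L\times\Sigma\times L$ and unique accepting location $\ell_e$. Its language $\mathcal{L}$ is the set of finite words labelling paths from $\ell_0$ to $\ell_e$. CFMDP and CFMC. A CFMDP is a deterministic PCFA with no transitions out of $\ell_e$. The action of a transition labelled $\sigma\in\Sigma^-$ is $\sigma$, and that of a transition labelled $\mathrm{Pb}_{(i,d)}$ is $i$. A CFMC is a CFMDP in which all transitions out of each location share one action. A CFMDP is normalised if, whenever $\ell\xrightarrow{\mathrm{Pb}_{(i,\mathtt{L})}}\ell_1$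 and $\ell\xrightarrow{\mathrm{Pb}_{(i,\mathtt{R})}}\ell_2$ both exist, $\ell_1\neq\ell_2$. Strategies. $\mathcal{S}(\mathcal{A})$ is the set of finite-memory strategies for $\mathcal{A}$, and $\mathcal{A}^\psi$ is the CFMC obtained by applying $\psi$. Semantics and weight. Labels are interpreted as functions $[\![\sigma]\!]$ on program states, with probabilistic and non-deterministic labels interpreted as the identity. $[\![\sigma_1\cdots\sigma_n]\!]=[\![\sigma_n]\!]\circ\cdots\circ[\![\sigma_1]\!]$. $wt(\tau)=2^{-n}$, where $n$ is the number of probabilistic labels in $\tau$. Violation probabilities. $$\mathbb{P}_\Phi(\mathcal{A})=\sup_{s\models\varphi_e}\sup_{\psi\in\mathcal{S}(\mathcal{A})}\sum_{\tau\in\mathcal{L}(\mathcal{A}^\psi)}wt(\tau)\,[\,[\![\tau]\!](s)\models\neg\varphi_f\,].$$ A set $\Theta\subseteq\Sigma^*$ is mergeable if it equals $\mathcal{L}(\mathcal{M})$ for some CFMC $\mathcal{M}$, and $\mathrm{Mergeable}(\Theta)$ is the set of its mergeable subsets. Then $$\mathbb{P}^{\mathcal{L}}_\Phi(\Theta)=\sup_{s\models\varphi_e}\sup_{\Pi\in\mathrm{Mergeable}(\Theta)}\sum_{\tau\in\Pi}wt(\tau)\,[\,[\![\tau]\!](s)\models\neg\varphi_f\,].$$ *)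

theory Defs
  imports "HOL-Analysis.Analysis"
begin

datatype dir = DL | DR

text \<open>Labels: probabilistic labels Pb (i,L)/Pb (i,R) for an identifier i of a fair binary
  probabilistic choice, non-deterministic labels Nd n (written *_n in the paper), and
  the remaining non-random labels St a (statements and assume-statements).\<close>
datatype ('i, 'n, 'a) label = Pb 'i dir | Nd 'n | St 'a

fun is_prob :: "('i, 'n, 'a) label \<Rightarrow> bool" where
  "is_prob (Pb i d) = True"
| "is_prob (Nd n) = False"
| "is_prob (St a) = False"

fun act :: "('i, 'n, 'a) label \<Rightarrow> 'i + ('i, 'n, 'a) label" where
  "act (Pb i d) = Inl i"
| "act (Nd n) = Inr (Nd n)"
| "act (St a) = Inr (St a)"

record ('l, 'lab) pcfa =
  locs :: "'l set"
  trans :: "('l \<times> 'lab \<times> 'l) set"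
  init :: 'l
  final :: 'l

definition is_pcfa :: "'lab set \<Rightarrow> ('l, 'lab) pcfa \<Rightarrow> bool" where
  "is_pcfa Sig A \<longleftrightarrow> finite (locs A) \<and> trans A \<subseteq> locs A \<times> Sig \<times> locs A
     \<and> init A \<in> locs A \<and> final A \<in> locs A"

inductive path :: "('l \<times> 'lab \<times> 'l) set \<Rightarrow> 'l \<Rightarrow> 'lab list \<Rightarrow> 'l \<Rightarrow> bool"
  for \<delta> where
  path_nil: "path \<delta> l [] l"
| path_cons: "(l, \<sigma>, l') \<in> \<delta> \<Longrightarrow> path \<delta> l' w l'' \<Longrightarrow> path \<delta> l (\<sigma> # w) l''"

definition lang :: "('l, 'lab) pcfa \<Rightarrow> 'lab list set" where
  "lang A = {w. path (trans A) (init A) w (final A)}"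

definition deterministic :: "('l, 'lab) pcfa \<Rightarrow> bool" where
  "deterministic A \<longleftrightarrow> (\<forall>l \<sigma> l1 l2. (l, \<sigma>, l1) \<in> trans A \<longrightarrow> (l, \<sigma>, l2) \<in> trans A \<longrightarrow> l1 = l2)"

definition is_cfmdp :: "('i, 'n, 'a) label set \<Rightarrow> ('l, ('i, 'n, 'a) label) pcfa \<Rightarrow> bool" where
  "is_cfmdp Sig A \<longleftrightarrow> is_pcfa Sig A \<and> deterministic A
     \<and> (\<forall>\<sigma> l'. (final A, \<sigma>, l') \<notin> trans A)"

definition is_cfmc :: "('i, 'n, 'a) label set \<Rightarrow> ('l, ('i, 'n, 'a) label) pcfa \<Rightarrow> bool" where
  "is_cfmc Sig A \<longleftrightarrow> is_cfmdp Sig A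
     \<and> (\<forall>l \<sigma>1 l1 \<sigma>2 l2. (l, \<sigma>1, l1) \<in> trans A \<longrightarrow> (l, \<sigma>2, l2) \<in> trans A \<longrightarrow> act \<sigma>1 = act \<sigma>2)"

definition normalised :: "('l, ('i, 'n, 'a) label) pcfa \<Rightarrow> bool" where
  "normalised A \<longleftrightarrow> (\<forall>l i l1 l2. (l, Pb i DL, l1) \<in> trans A \<longrightarrow> (l, Pb i DR, l2) \<in> trans A
     \<longrightarrow> l1 \<noteq> l2)"

record ('l, 'i, 'n, 'a) strategy =
  mem :: "nat set"
  mem0 :: nat
  choice :: "'l \<Rightarrow> nat \<Rightarrow> 'i + ('i, 'n, 'a) label"
  upd :: "nat \<Rightarrow> 'l \<Rightarrow> ('i, 'n, 'a) label \<Rightarrow> nat"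

definition strategies ::
  "('l, ('i, 'n, 'a) label) pcfa \<Rightarrow> ('l, 'i, 'n, 'a) strategy set" where
  "strategies A = {\<psi>. finite (mem \<psi>) \<and> mem0 \<psi> \<in> mem \<psi>
     \<and> (\<forall>m\<in>mem \<psi>. \<forall>l \<sigma>. upd \<psi> m l \<sigma> \<in> mem \<psi>)
     \<and> (\<forall>l\<in>locs A. \<forall>m\<in>mem \<psi>. (\<exists>\<sigma> l'. (l, \<sigma>, l') \<in> trans A)
          \<longrightarrow> (\<exists>\<sigma> l'. (l, \<sigma>, l') \<in> trans A \<and> act \<sigma> = choice \<psi> l m))}"

text \<open>The CFMC obtained by applying a strategy: product of the CFMDP with the memory;
  all product locations over the accepting location are merged into the unique accepting
  location None.\<close>
definition lift_loc :: "('l, 'lab) pcfa \<Rightarrow> 'l \<Rightarrow> nat \<Rightarrow> ('l \<times> nat) option" where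
  "lift_loc A l m = (if l = final A then None else Some (l, m))"

definition apply_strategy ::
  "('l, ('i, 'n, 'a) label) pcfa \<Rightarrow> ('l, 'i, 'n, 'a) strategy
     \<Rightarrow> (('l \<times> nat) option, ('i, 'n, 'a) label) pcfa" where
  "apply_strategy A \<psi> =
    \<lparr> locs = insert None (Some ` ((locs A - {final A}) \<times> mem \<psi>)),
      trans = {(Some (l, m), \<sigma>, lift_loc A l' (upd \<psi> m l \<sigma>)) | l m \<sigma> l'.
                 (l, \<sigma>, l') \<in> trans A \<and> l \<noteq> final A \<and> m \<in> mem \<psi> \<and> act \<sigma> = choice \<psi> l m},
      init = lift_loc A (init A) (mem0 \<psi>),
      final = None \<rparr>"

fun lsem :: "('a \<Rightarrow> 'st \<Rightarrow> 'st) \<Rightarrow> ('i, 'n, 'a) label \<Rightarrow> 'st \<Rightarrow> 'st" where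
  "lsem sem (Pb i d) = id"
| "lsem sem (Nd n) = id"
| "lsem sem (St a) = sem a"

text \<open>[[s1 ... sn]] = [[sn]] o ... o [[s1]]\<close>
definition wsem :: "('a \<Rightarrow> 'st \<Rightarrow> 'st) \<Rightarrow> ('i, 'n, 'a) label list \<Rightarrow> 'st \<Rightarrow> 'st" where
  "wsem sem \<tau> = fold (lsem sem) \<tau>"

definition wt :: "('i, 'n, 'a) label list \<Rightarrow> real" where
  "wt \<tau> = (1 / 2) ^ length (filter is_prob \<tau>)"

definition viol_sum ::
  "('a \<Rightarrow> 'st \<Rightarrow> 'st) \<Rightarrow> ('st \<Rightarrow> bool) \<Rightarrow> 'st \<Rightarrow> ('i, 'n, 'a) label list set \<Rightarrow> ennreal" where
  "viol_sum sem \<phi>f s T = (\<Sum>\<^sub>\<infinity>\<tau>\<in>T. ennreal (wt \<tau>) * (if \<not> \<phi>f (wsem sem \<tau> s) then 1 else 0))"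

definition viol_prob ::
  "('a \<Rightarrow> 'st \<Rightarrow> 'st) \<Rightarrow> ('st \<Rightarrow> bool) \<Rightarrow> ('st \<Rightarrow> bool)
     \<Rightarrow> ('l, ('i, 'n, 'a) label) pcfa \<Rightarrow> ennreal" where
  "viol_prob sem \<phi>e \<phi>f A =
     (SUP s\<in>{s. \<phi>e s}. SUP \<psi>\<in>strategies A. viol_sum sem \<phi>f s (lang (apply_strategy A \<psi>)))"

text \<open>Mergeable subsets: languages of CFMCs (over the label set Sig; finite location
  sets are encoded in nat).\<close>
definition mergeable_subsets ::
  "('i, 'n, 'a) label set \<Rightarrow> ('i, 'n, 'a) label list set \<Rightarrow> ('i, 'n, 'a) label list set set" where
  "mergeable_subsets Sig \<Theta> =
     {Mg. Mg \<subseteq> \<Theta> \<and> (\<exists>M :: (nat, ('i, 'n, 'a) label) pcfa. is_cfmc Sig M \<and> lang M = Mg)}"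

definition lang_viol_prob ::
  "('i, 'n, 'a) label set \<Rightarrow> ('a \<Rightarrow> 'st \<Rightarrow> 'st) \<Rightarrow> ('st \<Rightarrow> bool) \<Rightarrow> ('st \<Rightarrow> bool)
     \<Rightarrow> ('i, 'n, 'a) label list set \<Rightarrow> ennreal" where
  "lang_viol_prob Sig sem \<phi>e \<phi>f \<Theta> =
     (SUP s\<in>{s. \<phi>e s}. SUP Mg\<in>mergeable_subsets Sig \<Theta>. viol_sum sem \<phi>f s Mg)"

end

theory Submission
  imports Defs
begin

text \<open>Fix a state s satisfying the precondition and a strategy for P, and let L be the language
  of the induced Markov chain. Every trace in L is a trace of P, hence lies in the language of Q or
  of A; the traces of Q never violate the postcondition, so the violation mass of L is that of
  L \<inter> lang A. This set is again the language of a CFMC, namely the product of the induced chain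
  with the subset construction for A, so it is a mergeable subset of lang A and its violation mass
  is bounded by the language-level violation probability of A.\<close>

lemma is_cfmcI:
  assumes "finite (locs M)" "init M \<in> locs M" "final M \<in> locs M"
    and "\<And>l \<sigma> l'. (l, \<sigma>, l') \<in> trans M \<Longrightarrow> l \<in> locs M \<and> \<sigma> \<in> Sig \<and> l' \<in> locs M"
    and "\<And>l \<sigma> l1 l2. (l, \<sigma>, l1) \<in> trans M \<Longrightarrow> (l, \<sigma>, l2) \<in> trans M \<Longrightarrow> l1 = l2"
    and "\<And>\<sigma> l. (final M, \<sigma>, l) \<notin> trans M"
    and "\<And>l \<sigma>1 l1 \<sigma>2 l2. (l, \<sigma>1, l1) \<in> trans M \<Longrightarrow> (l, \<sigma>2, l2) \<in> trans M \<Longrightarrow> act \<sigma>1 = act \<sigma>2"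
  shows "is_cfmc Sig M"
  using assms unfolding is_cfmc_def is_cfmdp_def is_pcfa_def deterministic_def by fast

lemma is_pcfaD:
  assumes "is_pcfa Sig M"
  shows "finite (locs M)" "init M \<in> locs M" "final M \<in> locs M"
    and "(l, \<sigma>, l') \<in> trans M \<Longrightarrow> l \<in> locs M \<and> \<sigma> \<in> Sig \<and> l' \<in> locs M"
  using assms unfolding is_pcfa_def by blast+

lemma is_cfmcD:
  assumes "is_cfmc Sig M"
  shows "is_pcfa Sig M"
    and "(l, \<sigma>, l1) \<in> trans M \<Longrightarrow> (l, \<sigma>, l2) \<in> trans M \<Longrightarrow> l1 = l2"
    and "(final M, \<sigma>, l) \<notin> trans M"
    and "(l, \<sigma>1, l1) \<in> trans M \<Longrightarrow> (l, \<sigma>2, l2) \<in> trans M \<Longrightarrow> act \<sigma>1 = act \<sigma>2"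
  using assms unfolding is_cfmc_def is_cfmdp_def deterministic_def by blast+

definition rename_locs :: "('x \<Rightarrow> 'y) \<Rightarrow> ('x, 'lab) pcfa \<Rightarrow> ('y, 'lab) pcfa" where
  "rename_locs f M = \<lparr> locs = f ` locs M, trans = (\<lambda>(l, \<sigma>, l'). (f l, \<sigma>, f l')) ` trans M,
     init = f (init M), final = f (final M) \<rparr>"

lemma rename_locs_simps [simp]:
  "locs (rename_locs f M) = f ` locs M"
  "init (rename_locs f M) = f (init M)"
  "final (rename_locs f M) = f (final M)"
  by (simp_all add: rename_locs_def)

lemma trans_rename_locs:
  "(x, \<sigma>, y) \<in> trans (rename_locs f M) \<longleftrightarrow> (\<exists>a b. (a, \<sigma>, b) \<in> trans M \<and> x = f a \<and> y = f b)"
  unfolding rename_locs_def by force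

lemma path_rename_locs:
  "path (trans M) l w l' \<Longrightarrow> path (trans (rename_locs f M)) (f l) w (f l')"
proof (induction rule: path.induct)
  case (path_nil l)
  show ?case by (rule path_nil)
next
  case (path_cons l \<sigma> l' w l'')
  then show ?case by (blast intro: path.path_cons trans_rename_locs[THEN iffD2])
qed

lemma path_rename_locsD:
  assumes "path (trans (rename_locs f M)) x w y"
    and "inj_on f (locs M)" and "\<And>l \<sigma> l'. (l, \<sigma>, l') \<in> trans M \<Longrightarrow> l \<in> locs M \<and> l' \<in> locs M"
  shows "l \<in> locs M \<Longrightarrow> l' \<in> locs M \<Longrightarrow> x = f l \<Longrightarrow> y = f l' \<Longrightarrow> path (trans M) l w l'"
  using assms(1)
proof (induction arbitrary: l rule: path.induct)
  case (path_nil x)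
  then have "l = l'" using assms(2) by (metis inj_onD)
  then show ?case by (simp add: path.path_nil)
next
  case (path_cons x \<sigma> x' w y)
  then obtain a b where ab: "(a, \<sigma>, b) \<in> trans M" "x = f a" "x' = f b"
    by (auto simp: trans_rename_locs)
  with path_cons.prems assms(2,3) have "a = l" by (metis inj_onD)
  with ab path_cons assms(3) show ?case by (blast intro: path.path_cons)
qed

lemma lang_rename_locs:
  assumes "is_pcfa Sig M" "inj_on f (locs M)"
  shows "lang (rename_locs f M) = lang M"
  using path_rename_locs path_rename_locsD[OF _ assms(2)] is_pcfaD[OF assms(1)]
  unfolding lang_def by fastforce

lemma is_cfmc_rename_locs:
  assumes M: "is_cfmc Sig M" and f: "inj_on f (locs M)"
  shows "is_cfmc Sig (rename_locs f M)"
proof -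
  note pcfa = is_pcfaD[OF is_cfmcD(1)[OF M]]
    and det = is_cfmcD(2)[OF M] and fin = is_cfmcD(3)[OF M] and act = is_cfmcD(4)[OF M]
  have src: "a = c" if "(a, \<sigma>, b) \<in> trans M" "(c, \<sigma>', d) \<in> trans M" "f a = f c" for a b c d \<sigma> \<sigma>'
    using that pcfa(4) f by (meson inj_onD)
  show ?thesis
  proof (rule is_cfmcI)
    show "finite (locs (rename_locs f M))" "init (rename_locs f M) \<in> locs (rename_locs f M)"
      "final (rename_locs f M) \<in> locs (rename_locs f M)"
      using pcfa by simp_all
  next
    fix x \<sigma> y assume "(x, \<sigma>, y) \<in> trans (rename_locs f M)"
    then show "x \<in> locs (rename_locs f M) \<and> \<sigma> \<in> Sig \<and> y \<in> locs (rename_locs f M)"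
      using pcfa(4) by (auto simp: trans_rename_locs)
  next
    fix x \<sigma> y1 y2 assume "(x, \<sigma>, y1) \<in> trans (rename_locs f M)" "(x, \<sigma>, y2) \<in> trans (rename_locs f M)"
    then obtain a1 b1 a2 b2 where "(a1, \<sigma>, b1) \<in> trans M" "(a2, \<sigma>, b2) \<in> trans M"
      "x = f a1" "x = f a2" "y1 = f b1" "y2 = f b2"
      unfolding trans_rename_locs by blast
    with src det show "y1 = y2" by metis
  next
    fix \<sigma> y
    show "(final (rename_locs f M), \<sigma>, y) \<notin> trans (rename_locs f M)"
    proof
      assume "(final (rename_locs f M), \<sigma>, y) \<in> trans (rename_locs f M)"
      then obtain a b where "(a, \<sigma>, b) \<in> trans M" "f (final M) = f a"
        unfolding trans_rename_locs by auto
      with pcfa(3,4) f have "final M = a" by (meson inj_onD)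
      with fin \<open>(a, \<sigma>, b) \<in> trans M\<close> show False by blast
    qed
  next
    fix x \<sigma>1 y1 \<sigma>2 y2
    assume "(x, \<sigma>1, y1) \<in> trans (rename_locs f M)" "(x, \<sigma>2, y2) \<in> trans (rename_locs f M)"
    then obtain a1 b1 a2 b2 where "(a1, \<sigma>1, b1) \<in> trans M" "(a2, \<sigma>2, b2) \<in> trans M"
      "x = f a1" "x = f a2"
      unfolding trans_rename_locs by blast
    with src act show "act \<sigma>1 = act \<sigma>2" by metis
  qed
qed

lemma cfmc_with_nat_locs:
  fixes M :: "('x, ('i, 'n, 'a) label) pcfa"
  assumes "is_cfmc Sig M"
  obtains N :: "(nat, ('i, 'n, 'a) label) pcfa" where "is_cfmc Sig N" "lang N = lang M"
proof -
  obtain f :: "'x \<Rightarrow> nat" where "inj_on f (locs M)"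
    using finite_imp_inj_to_nat_seg is_pcfaD(1)[OF is_cfmcD(1)[OF assms]] by blast
  then show ?thesis
    using that is_cfmc_rename_locs lang_rename_locs is_cfmcD(1) assms by blast
qed

definition succs :: "('b \<times> 'lab \<times> 'b) set \<Rightarrow> 'b set \<Rightarrow> 'lab \<Rightarrow> 'b set" where
  "succs \<delta> S \<sigma> = {b'. \<exists>b\<in>S. (b, \<sigma>, b') \<in> \<delta>}"

definition prod_loc :: "('l, 'lab) pcfa \<Rightarrow> ('b, 'lab) pcfa \<Rightarrow> 'l \<Rightarrow> 'b set \<Rightarrow> ('l \<times> 'b set) option" where
  "prod_loc M A q S = (if q = final M \<and> final A \<in> S then None else Some (q, S))"

definition subset_product :: "('l, 'lab) pcfa \<Rightarrow> ('b, 'lab) pcfa \<Rightarrow> (('l \<times> 'b set) option, 'lab) pcfa" where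
  "subset_product M A =
    \<lparr> locs = insert None ((\<lambda>(q, S). prod_loc M A q S) ` (locs M \<times> Pow (locs A))),
      trans = {(prod_loc M A q S, \<sigma>, prod_loc M A q' (succs (trans A) S \<sigma>)) | q S \<sigma> q'.
                 (q, \<sigma>, q') \<in> trans M \<and> S \<subseteq> locs A},
      init = prod_loc M A (init M) {init A},
      final = None \<rparr>"

lemma subset_product_simps [simp]:
  "locs (subset_product M A) = insert None ((\<lambda>(q, S). prod_loc M A q S) ` (locs M \<times> Pow (locs A)))"
  "init (subset_product M A) = prod_loc M A (init M) {init A}"
  "final (subset_product M A) = None"
  by (simp_all add: subset_product_def)

lemma trans_subset_product:
  "(x, \<sigma>, y) \<in> trans (subset_product M A) \<longleftrightarrow>
     (\<exists>q S q'. (q, \<sigma>, q') \<in> trans M \<and> S \<subseteq> locs A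
        \<and> x = prod_loc M A q S \<and> y = prod_loc M A q' (succs (trans A) S \<sigma>))"
  unfolding subset_product_def by auto

lemma prod_loc_eq_None_iff: "prod_loc M A q S = None \<longleftrightarrow> q = final M \<and> final A \<in> S"
  by (simp add: prod_loc_def)

lemma prod_loc_nonfinal: "q \<noteq> final M \<Longrightarrow> prod_loc M A q S = Some (q, S)"
  by (simp add: prod_loc_def)

lemma prod_loc_eq_Some: "prod_loc M A q S = Some p \<Longrightarrow> p = (q, S)"
  by (simp add: prod_loc_def split: if_splits)

lemma path_subset_productI:
  assumes "path (trans M) q w (final M)" "S \<subseteq> locs A" "b \<in> S" "path (trans A) b w (final A)"
    and "\<And>b \<sigma> b'. (b, \<sigma>, b') \<in> trans A \<Longrightarrow> b' \<in> locs A"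
  shows "path (trans (subset_product M A)) (prod_loc M A q S) w None"
  using assms(1-4)
proof (induction q w "final M" arbitrary: S b rule: path.induct)
  case path_nil
  then have "final A \<in> S" by (auto elim: path.cases)
  then show ?case by (simp add: prod_loc_def path.path_nil)
next
  case (path_cons q \<sigma> q' w)
  from \<open>path (trans A) b (\<sigma> # w) (final A)\<close> obtain b' where b': "(b, \<sigma>, b') \<in> trans A" "path (trans A) b' w (final A)"
    by (auto elim: path.cases)
  have "b' \<in> succs (trans A) S \<sigma>" "succs (trans A) S \<sigma> \<subseteq> locs A"
    using b'(1) path_cons.prems(2) assms(5) unfolding succs_def by blast+
  with path_cons b' show ?case
    by (blast intro: path.path_cons trans_subset_product[THEN iffD2])
qed

lemma path_subset_productD:
  assumes "path (trans (subset_product M A)) x w None" "\<And>\<sigma> l. (final M, \<sigma>, l) \<notin> trans M"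
  shows "x = prod_loc M A q S \<Longrightarrow> path (trans M) q w (final M) \<and> (\<exists>b\<in>S. path (trans A) b w (final A))"
  using assms(1)
proof (induction x w "None :: ('a \<times> 'b set) option" arbitrary: q S rule: path.induct)
  case path_nil
  then have "q = final M" "final A \<in> S" using prod_loc_eq_None_iff by metis+
  then show ?case by (blast intro: path.path_nil)
next
  case (path_cons x \<sigma> x' w)
  then obtain q0 S0 q0' where t: "(q0, \<sigma>, q0') \<in> trans M"
    "x = prod_loc M A q0 S0" "x' = prod_loc M A q0' (succs (trans A) S0 \<sigma>)"
    by (auto simp: trans_subset_product)
  have "q0 \<noteq> final M" using t(1) assms(2) by blast
  with t(2) path_cons.prems have "q0 = q" "S0 = S" by (auto dest: prod_loc_eq_Some simp: prod_loc_nonfinal)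
  with path_cons.hyps(3)[OF t(3)] t(1) show ?case
    unfolding succs_def by (auto intro: path.path_cons)
qed

lemma lang_subset_product:
  assumes "\<And>\<sigma> l. (final M, \<sigma>, l) \<notin> trans M" "is_pcfa Sig A"
  shows "lang (subset_product M A) = lang M \<inter> lang A"
proof (intro equalityI subsetI)
  fix w assume "w \<in> lang (subset_product M A)"
  with path_subset_productD[OF _ assms(1) refl] show "w \<in> lang M \<inter> lang A"
    unfolding lang_def by auto
next
  fix w assume "w \<in> lang M \<inter> lang A"
  with path_subset_productI[of M "init M" w "{init A}" A "init A"] is_pcfaD[OF assms(2)]
  show "w \<in> lang (subset_product M A)"
    unfolding lang_def by auto
qed

lemma is_cfmc_subset_product:
  assumes M: "is_cfmc Sig M" and A: "is_pcfa Sig A"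
  shows "is_cfmc Sig (subset_product M A)"
proof -
  note pcfa = is_pcfaD[OF is_cfmcD(1)[OF M]]
    and det = is_cfmcD(2)[OF M] and fin = is_cfmcD(3)[OF M] and act = is_cfmcD(4)[OF M]
  have succs_locs: "succs (trans A) S \<sigma> \<subseteq> locs A" for S \<sigma>
    using is_pcfaD(4)[OF A] unfolding succs_def by blast
  text \<open>Since the accepting location of M has no successors, a product transition determines the
    pair (q, S) it leaves from.\<close>
  have src: "q = q' \<and> S = S'"
    if "(q, \<sigma>, r) \<in> trans M" "(q', \<sigma>', r') \<in> trans M" "prod_loc M A q S = prod_loc M A q' S'"
    for q q' r r' S S' \<sigma> \<sigma>'
    using that fin by (metis prod_loc_nonfinal option.inject prod.inject)
  show ?thesis
  proof (rule is_cfmcI)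
    show "finite (locs (subset_product M A))" using pcfa(1) is_pcfaD(1)[OF A] by simp
    show "init (subset_product M A) \<in> locs (subset_product M A)"
      "final (subset_product M A) \<in> locs (subset_product M A)"
      using pcfa(2) is_pcfaD(2)[OF A] by auto
  next
    fix x \<sigma> y assume "(x, \<sigma>, y) \<in> trans (subset_product M A)"
    then show "x \<in> locs (subset_product M A) \<and> \<sigma> \<in> Sig \<and> y \<in> locs (subset_product M A)"
      using pcfa(4) succs_locs by (fastforce simp: trans_subset_product)
  next
    fix x \<sigma> y1 y2
    assume "(x, \<sigma>, y1) \<in> trans (subset_product M A)" "(x, \<sigma>, y2) \<in> trans (subset_product M A)"
    then obtain q1 S1 q1' q2 S2 q2' where t: "(q1, \<sigma>, q1') \<in> trans M" "(q2, \<sigma>, q2') \<in> trans M"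
      "x = prod_loc M A q1 S1" "x = prod_loc M A q2 S2"
      "y1 = prod_loc M A q1' (succs (trans A) S1 \<sigma>)" "y2 = prod_loc M A q2' (succs (trans A) S2 \<sigma>)"
      unfolding trans_subset_product by blast
    with src have "q1 = q2" "S1 = S2" by metis+
    with t det show "y1 = y2" by metis
  next
    fix \<sigma> y
    show "(final (subset_product M A), \<sigma>, y) \<notin> trans (subset_product M A)"
    proof
      assume "(final (subset_product M A), \<sigma>, y) \<in> trans (subset_product M A)"
      then obtain q S q' where "(q, \<sigma>, q') \<in> trans M" "None = prod_loc M A q S"
        by (auto simp: trans_subset_product)
      then show False using fin by (simp add: prod_loc_def split: if_splits)
    qed
  next
    fix x \<sigma>1 y1 \<sigma>2 y2
    assume "(x, \<sigma>1, y1) \<in> trans (subset_product M A)" "(x, \<sigma>2, y2) \<in> trans (subset_product M A)"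
    then obtain q1 S1 q1' q2 S2 q2' where t: "(q1, \<sigma>1, q1') \<in> trans M" "(q2, \<sigma>2, q2') \<in> trans M"
      "x = prod_loc M A q1 S1" "x = prod_loc M A q2 S2"
      unfolding trans_subset_product by blast
    with src have "q1 = q2" by metis
    with t act show "act \<sigma>1 = act \<sigma>2" by metis
  qed
qed

lemma trans_apply_strategy:
  "(x, \<sigma>, y) \<in> trans (apply_strategy P \<psi>) \<longleftrightarrow>
     (\<exists>l m l'. x = Some (l, m) \<and> y = lift_loc P l' (upd \<psi> m l \<sigma>)
        \<and> (l, \<sigma>, l') \<in> trans P \<and> l \<noteq> final P \<and> m \<in> mem \<psi> \<and> act \<sigma> = choice \<psi> l m)"
  unfolding apply_strategy_def by auto

lemma path_apply_strategyD:
  "path (trans (apply_strategy P \<psi>)) x w None \<Longrightarrow> x = lift_loc P l m \<Longrightarrow> path (trans P) l w (final P)"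
proof (induction x w "None :: ('a \<times> nat) option" arbitrary: l m rule: path.induct)
  case path_nil
  then show ?case by (simp add: lift_loc_def path.path_nil split: if_splits)
next
  case (path_cons x \<sigma> x' w)
  then obtain l0 m0 l0' where "x = Some (l0, m0)" "x' = lift_loc P l0' (upd \<psi> m0 l0 \<sigma>)"
    "(l0, \<sigma>, l0') \<in> trans P"
    by (auto simp: trans_apply_strategy)
  with path_cons show ?case
    by (auto simp: lift_loc_def split: if_splits intro: path.path_cons)
qed

lemma lang_apply_strategy_subset: "lang (apply_strategy P \<psi>) \<subseteq> lang P"
  using path_apply_strategyD[OF _ refl] by (auto simp: lang_def apply_strategy_def)

lemma is_cfmc_apply_strategy:
  assumes P: "is_cfmdp Sig P" and \<psi>: "\<psi> \<in> strategies P"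
  shows "is_cfmc Sig (apply_strategy P \<psi>)"
proof -
  have pcfa: "is_pcfa Sig P" and det: "deterministic P"
    using P unfolding is_cfmdp_def by blast+
  have mem: "finite (mem \<psi>)" "mem0 \<psi> \<in> mem \<psi>" "\<And>m l \<sigma>. m \<in> mem \<psi> \<Longrightarrow> upd \<psi> m l \<sigma> \<in> mem \<psi>"
    using \<psi> unfolding strategies_def by blast+
  have lift: "lift_loc P l m \<in> locs (apply_strategy P \<psi>)" if "l \<in> locs P" "m \<in> mem \<psi>" for l m
    using that by (auto simp: lift_loc_def apply_strategy_def)
  show ?thesis
  proof (rule is_cfmcI)
    show "finite (locs (apply_strategy P \<psi>))" "final (apply_strategy P \<psi>) \<in> locs (apply_strategy P \<psi>)"
      using is_pcfaD(1)[OF pcfa] mem by (simp_all add: apply_strategy_def)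
    show "init (apply_strategy P \<psi>) \<in> locs (apply_strategy P \<psi>)"
      using lift is_pcfaD(2)[OF pcfa] mem by (simp add: apply_strategy_def)
  next
    fix x \<sigma> y assume "(x, \<sigma>, y) \<in> trans (apply_strategy P \<psi>)"
    then obtain l m l' where "x = Some (l, m)" "y = lift_loc P l' (upd \<psi> m l \<sigma>)"
      "(l, \<sigma>, l') \<in> trans P" "l \<noteq> final P" "m \<in> mem \<psi>"
      unfolding trans_apply_strategy by blast
    with is_pcfaD(4)[OF pcfa] mem(3) lift
    show "x \<in> locs (apply_strategy P \<psi>) \<and> \<sigma> \<in> Sig \<and> y \<in> locs (apply_strategy P \<psi>)"
      by (auto simp: apply_strategy_def)
  next
    fix x \<sigma> y1 y2
    assume "(x, \<sigma>, y1) \<in> trans (apply_strategy P \<psi>)" "(x, \<sigma>, y2) \<in> trans (apply_strategy P \<psi>)"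
    then obtain l m l1 l2 where "x = Some (l, m)" "(l, \<sigma>, l1) \<in> trans P" "(l, \<sigma>, l2) \<in> trans P"
      "y1 = lift_loc P l1 (upd \<psi> m l \<sigma>)" "y2 = lift_loc P l2 (upd \<psi> m l \<sigma>)"
      unfolding trans_apply_strategy by blast
    with det show "y1 = y2" unfolding deterministic_def by metis
  next
    fix \<sigma> y show "(final (apply_strategy P \<psi>), \<sigma>, y) \<notin> trans (apply_strategy P \<psi>)"
      by (auto simp: trans_apply_strategy apply_strategy_def)
  next
    fix x \<sigma>1 y1 \<sigma>2 y2
    assume "(x, \<sigma>1, y1) \<in> trans (apply_strategy P \<psi>)" "(x, \<sigma>2, y2) \<in> trans (apply_strategy P \<psi>)"
    then show "act \<sigma>1 = act \<sigma>2" by (auto simp: trans_apply_strategy)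
  qed
qed

lemma mergeable_inter_lang:
  fixes M :: "('l, ('i, 'n, 'a) label) pcfa"
  assumes M: "is_cfmc Sig M" and A: "is_pcfa Sig A"
  shows "lang M \<inter> lang A \<in> mergeable_subsets Sig (lang A)"
proof -
  obtain N :: "(nat, ('i, 'n, 'a) label) pcfa"
    where "is_cfmc Sig N" "lang N = lang (subset_product M A)"
    using cfmc_with_nat_locs[OF is_cfmc_subset_product[OF M A]] .
  moreover have "lang (subset_product M A) = lang M \<inter> lang A"
    using lang_subset_product is_cfmcD(3)[OF M] A by blast
  ultimately show ?thesis unfolding mergeable_subsets_def by blast
qed

lemma viol_sum_restrict:
  assumes "\<And>\<tau>. \<tau> \<in> T - B \<Longrightarrow> \<phi>f (wsem sem \<tau> s)"
  shows "viol_sum sem \<phi>f s T = viol_sum sem \<phi>f s (T \<inter> B)"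
  unfolding viol_sum_def by (rule infsum_cong_neutral) (use assms in auto)

lemma viol_sum_le_lang_viol_prob:
  assumes "\<phi>e s" "Mg \<in> mergeable_subsets Sig \<Theta>"
  shows "viol_sum sem \<phi>f s Mg \<le> lang_viol_prob Sig sem \<phi>e \<phi>f \<Theta>"
  unfolding lang_viol_prob_def using assms by (auto intro!: SUP_upper2[of s] SUP_upper)

theorem mainTheorem5:
  fixes Sig :: "('i, 'n, 'a) label set"
    and sem :: "'a \<Rightarrow> 'st \<Rightarrow> 'st"
    and \<phi>e \<phi>f :: "'st \<Rightarrow> bool"
    and P :: "('p, ('i, 'n, 'a) label) pcfa"
    and Q :: "('q, ('i, 'n, 'a) label) pcfa"
    and A :: "('b, ('i, 'n, 'a) label) pcfa"
    and \<beta> :: real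
  assumes "finite Sig"
    and "is_cfmdp Sig P" and "normalised P"
    and "0 \<le> \<beta>" and "\<beta> \<le> 1"
    and "is_pcfa Sig Q" and "is_pcfa Sig A"
    and "lang P \<subseteq> lang Q \<union> lang A"
    and "\<forall>\<tau>\<in>lang Q. \<forall>s. \<phi>e s \<longrightarrow> \<phi>f (wsem sem \<tau> s)"
    and "lang_viol_prob Sig sem \<phi>e \<phi>f (lang A) \<le> ennreal \<beta>"
  shows "viol_prob sem \<phi>e \<phi>f P \<le> ennreal \<beta>"
  unfolding viol_prob_def
proof (intro SUP_least)
  fix s \<psi> assume s: "s \<in> {s. \<phi>e s}" and \<psi>: "\<psi> \<in> strategies P"
  let ?L = "lang (apply_strategy P \<psi>)"
  have "viol_sum sem \<phi>f s ?L = viol_sum sem \<phi>f s (?L \<inter> lang A)"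
    using lang_apply_strategy_subset assms(8,9) s by (intro viol_sum_restrict) blast
  also have "\<dots> \<le> lang_viol_prob Sig sem \<phi>e \<phi>f (lang A)"
    using mergeable_inter_lang[OF is_cfmc_apply_strategy[OF assms(2) \<psi>] assms(7)] s
    by (intro viol_sum_le_lang_viol_prob) auto
  also have "\<dots> \<le> ennreal \<beta>" by (rule assms(10))
  finally show "viol_sum sem \<phi>f s ?L \<le> ennreal \<beta>" .
qed

end
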